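(* Let $u\neq v$ be vertices of $T$ such that $u$ is either an ancestor or a descendant of $v$. Let $u'$ be the vertex reached after executing the routing steps of Case 1 (if $u$ is an ancestor of $v$) or of Case 2 (if $u$ is a descendant of $v$) when routing from $u$ to $v$. Then: (1) If $S_u$ is a proper prefix of $S_v$, then $|S_{u'}|>|S_u|$; moreover, either $S_{u'}=S_v$ or $S_{u'}$ is a proper prefix of $S_v$. (2) If $S_v$ is a proper prefix of $S_u$, then $|S_{u'}|<|S_u|$; moreover, either $S_{u'}=S_v$ or $S_v$ is a proper prefix of $S_{u'}$. (3) Suppose the longest common prefix $S$ of $S_u$ and $S_v$ has length $m<\min\{|S_u|,|S_v|\}$. Then $|S_{u'}|<|S_u|$; moreover, either $S_{u'}=S$ or $S$ is a proper prefix of $S_{u'}$.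
   Context: Let $T$ be a rooted tree on $n$ vertices with positive edge weights. Ancestor/descendant refer to $T$, and a vertex counts as its own ancestor and descendant; "deepest"/"highest" refer to depth in $T$. $T_v$ is the subtree of $T$ rooted at $v$. For every non-leaf vertex $v$ fix a child $c_1(v)$ with $|T_{c_1(v)}|$ maximal; edges $(v,c_1(v))$ are leftmost. A subtree $R$ of $T$ is rooted at its vertex closest to the root, $rt(R)$, and inherits the leftmost labelling; $R_v$ is the subtree of $R$ rooted at $v$. $P_R(v)$ is the longest downward path from $v$ in $R$ using only leftmost edges, with last vertex $l(v)$; $l(R):=l(rt(R))$. A vertex $v$ of $R$ is $d$-balanced if $|R_{c_1(v)}|\le |R|-d$ (with $|R_{c_1(v)}|=0$ if $c_1(v)$ is undefined or not in $R$); $b_d(v)$ is the first $d$-balanced vertex on $P_R(v)$, or NULL. $CV(R,d)=\emptyset$ if $b_d(rt(R))$ is NULL, else $\{b\}\cup\bigcup_w CV(R_w,d)$ with $b=b_d(rt(R))$ and $w$ ranging over children of $b$ in $R$. Fix an integer $k\ge4$; for a subtree $R$ with $m$ vertices, $C_R=V(R)$ if $k\ge m/2-1$, else $C_R=CV(R,m/k)\cup\{l(R),rt(R)\}$. Canonical subtrees: $T$ is canonical; if $R$ is canonical, each component of $R$ minus $C_R$ is canonical. Each vertex $v$ lies in $C_R$ for exactly one canonical $R$, denoted $T^v$. Canonical sequences: $T$ is assigned the empty integer sequence; if a canonical subtree $R$ has been assigned the sequence $S$ and the components of $R$ minus $C_R$ are $R_1,\dots,R_p$ (in some fixed order), then $R_j$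 is assigned $S$ followed by $j$. $S_v$ denotes the sequence assigned to $T^v$. Routing steps: Case 1 ($u$ an ancestor of $v$): let $X$ be the vertices of $C_{T^u}$ that are ancestors of $v$ and $x$ the deepest; move to $x$, then to the child of $x$ that is an ancestor of $v$. Case 2 ($u$ a descendant of $v$): let $X$ be the vertices of $C_{T^u}$ that are descendants of $v$ and ancestors of $u$ and $x$ the highest; move to $x$, then to the parent of $x$. (Moving to the current vertex means staying.) *)

theory Defs
  imports Complex_Main "HOL-Library.Sublist"
begin

text \<open>A rooted tree is given by a finite vertex set V, a root r and a parent map par,
  with the convention par r = r.  Edge weights play no role in the routing steps and
  are therefore omitted.\<close>

definition anc :: "('a \<Rightarrow> 'a) \<Rightarrow> 'a \<Rightarrow> 'a \<Rightarrow> bool" where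
  "anc par u v \<longleftrightarrow> (\<exists>n. (par ^^ n) v = u)"

definition is_rooted_tree :: "'a set \<Rightarrow> 'a \<Rightarrow> ('a \<Rightarrow> 'a) \<Rightarrow> bool" where
  "is_rooted_tree V r par \<longleftrightarrow> finite V \<and> r \<in> V \<and> par r = r \<and>
     (\<forall>v\<in>V. par v \<in> V \<and> anc par r v)"

definition child :: "'a \<Rightarrow> ('a \<Rightarrow> 'a) \<Rightarrow> 'a \<Rightarrow> 'a \<Rightarrow> bool" where
  "child r par w x \<longleftrightarrow> w \<noteq> r \<and> par w = x"

definition Tsub :: "'a set \<Rightarrow> ('a \<Rightarrow> 'a) \<Rightarrow> 'a \<Rightarrow> 'a set" where
  "Tsub V par v = {w \<in> V. anc par v w}"

text \<open>c1 is a fixed choice of a child with maximal subtree; its value at leaves is irrelevant.\<close>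
definition valid_c1 :: "'a set \<Rightarrow> 'a \<Rightarrow> ('a \<Rightarrow> 'a) \<Rightarrow> ('a \<Rightarrow> 'a) \<Rightarrow> bool" where
  "valid_c1 V r par c1 \<longleftrightarrow> (\<forall>v\<in>V. (\<exists>w\<in>V. child r par w v) \<longrightarrow>
      (c1 v \<in> V \<and> child r par (c1 v) v \<and>
       (\<forall>w\<in>V. child r par w v \<longrightarrow> card (Tsub V par w) \<le> card (Tsub V par (c1 v)))))"

definition on_path :: "('a \<Rightarrow> 'a) \<Rightarrow> 'a \<Rightarrow> 'a \<Rightarrow> 'a \<Rightarrow> bool" where
  "on_path par x y z \<longleftrightarrow> (anc par z x \<or> anc par z y) \<and>
     (\<forall>w. anc par w x \<and> anc par w y \<longrightarrow> anc par w z)"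

text \<open>Subtrees of T = nonempty vertex sets inducing connected subgraphs.\<close>
definition is_subtree :: "'a set \<Rightarrow> ('a \<Rightarrow> 'a) \<Rightarrow> 'a set \<Rightarrow> bool" where
  "is_subtree V par R \<longleftrightarrow> R \<subseteq> V \<and> R \<noteq> {} \<and>
     (\<forall>x\<in>R. \<forall>y\<in>R. \<forall>z. on_path par x y z \<longrightarrow> z \<in> R)"

definition rt :: "('a \<Rightarrow> 'a) \<Rightarrow> 'a set \<Rightarrow> 'a" where
  "rt par R = (THE x. x \<in> R \<and> (\<forall>y\<in>R. anc par x y))"

definition sub :: "('a \<Rightarrow> 'a) \<Rightarrow> 'a set \<Rightarrow> 'a \<Rightarrow> 'a set" where
  "sub par R v = {w \<in> R. anc par v w}"

definition leftmost :: "'a \<Rightarrow> ('a \<Rightarrow> 'a) \<Rightarrow> ('a \<Rightarrow> 'a) \<Rightarrow> 'a \<Rightarrow> bool" where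
  "leftmost r par c1 w \<longleftrightarrow> w \<noteq> r \<and> c1 (par w) = w"

definition onP :: "'a \<Rightarrow> ('a \<Rightarrow> 'a) \<Rightarrow> ('a \<Rightarrow> 'a) \<Rightarrow> 'a set \<Rightarrow> 'a \<Rightarrow> 'a \<Rightarrow> bool" where
  "onP r par c1 R v w \<longleftrightarrow> w \<in> R \<and> anc par v w \<and>
     (\<forall>x. anc par v x \<and> anc par x w \<and> x \<noteq> v \<longrightarrow> leftmost r par c1 x)"

definition lend :: "'a \<Rightarrow> ('a \<Rightarrow> 'a) \<Rightarrow> ('a \<Rightarrow> 'a) \<Rightarrow> 'a set \<Rightarrow> 'a \<Rightarrow> 'a" where
  "lend r par c1 R v = (THE w. onP r par c1 R v w \<and> (\<forall>w'. onP r par c1 R v w' \<longrightarrow> anc par w' w))"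

definition c1size :: "'a \<Rightarrow> ('a \<Rightarrow> 'a) \<Rightarrow> ('a \<Rightarrow> 'a) \<Rightarrow> 'a set \<Rightarrow> 'a \<Rightarrow> nat" where
  "c1size r par c1 R v = (if c1 v \<in> R \<and> child r par (c1 v) v then card (sub par R (c1 v)) else 0)"

definition balanced :: "'a \<Rightarrow> ('a \<Rightarrow> 'a) \<Rightarrow> ('a \<Rightarrow> 'a) \<Rightarrow> 'a set \<Rightarrow> real \<Rightarrow> 'a \<Rightarrow> bool" where
  "balanced r par c1 R d v \<longleftrightarrow> real (c1size r par c1 R v) \<le> real (card R) - d"

definition bd :: "'a \<Rightarrow> ('a \<Rightarrow> 'a) \<Rightarrow> ('a \<Rightarrow> 'a) \<Rightarrow> 'a set \<Rightarrow> real \<Rightarrow> 'a \<Rightarrow> 'a option" where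
  "bd r par c1 R d v =
    (if \<exists>w. onP r par c1 R v w \<and> balanced r par c1 R d w
     then Some (THE w. onP r par c1 R v w \<and> balanced r par c1 R d w \<and>
                  (\<forall>w'. onP r par c1 R v w' \<and> balanced r par c1 R d w' \<longrightarrow> anc par w w'))
     else None)"

inductive inCV :: "'a \<Rightarrow> ('a \<Rightarrow> 'a) \<Rightarrow> ('a \<Rightarrow> 'a) \<Rightarrow> 'a set \<Rightarrow> real \<Rightarrow> 'a \<Rightarrow> bool"
  for r par c1 where
  base: "bd r par c1 R d (rt par R) = Some b \<Longrightarrow> inCV r par c1 R d b"
| step: "bd r par c1 R d (rt par R) = Some b \<Longrightarrow> w \<in> R \<Longrightarrow> child r par w b \<Longrightarrow>
         inCV r par c1 (sub par R w) d x \<Longrightarrow> inCV r par c1 R d x"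

definition CV :: "'a \<Rightarrow> ('a \<Rightarrow> 'a) \<Rightarrow> ('a \<Rightarrow> 'a) \<Rightarrow> 'a set \<Rightarrow> real \<Rightarrow> 'a set" where
  "CV r par c1 R d = {x. inCV r par c1 R d x}"

definition CR :: "'a \<Rightarrow> ('a \<Rightarrow> 'a) \<Rightarrow> ('a \<Rightarrow> 'a) \<Rightarrow> nat \<Rightarrow> 'a set \<Rightarrow> 'a set" where
  "CR r par c1 k R =
    (if real k \<ge> real (card R) / 2 - 1 then R
     else CV r par c1 R (real (card R) / real k) \<union> {lend r par c1 R (rt par R), rt par R})"

definition components :: "'a set \<Rightarrow> ('a \<Rightarrow> 'a) \<Rightarrow> 'a set \<Rightarrow> 'a set set" where
  "components V par S = {Q. Q \<subseteq> S \<and> is_subtree V par Q \<and>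
      (\<forall>Q'. Q \<subseteq> Q' \<and> Q' \<subseteq> S \<and> is_subtree V par Q' \<longrightarrow> Q' = Q)}"

inductive canonical :: "'a set \<Rightarrow> 'a \<Rightarrow> ('a \<Rightarrow> 'a) \<Rightarrow> ('a \<Rightarrow> 'a) \<Rightarrow> nat \<Rightarrow> 'a set \<Rightarrow> bool"
  for V r par c1 k where
  top: "canonical V r par c1 k V"
| comp: "canonical V r par c1 k R \<Longrightarrow> Q \<in> components V par (R - CR r par c1 k R) \<Longrightarrow>
         canonical V r par c1 k Q"

definition Tv :: "'a set \<Rightarrow> 'a \<Rightarrow> ('a \<Rightarrow> 'a) \<Rightarrow> ('a \<Rightarrow> 'a) \<Rightarrow> nat \<Rightarrow> 'a \<Rightarrow> 'a set" where
  "Tv V r par c1 k v = (THE R. canonical V r par c1 k R \<and> v \<in> CR r par c1 k R)"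

text \<open>A canonical-sequence assignment (components numbered 1..p in an arbitrary fixed order).\<close>
definition valid_seq :: "'a set \<Rightarrow> 'a \<Rightarrow> ('a \<Rightarrow> 'a) \<Rightarrow> ('a \<Rightarrow> 'a) \<Rightarrow> nat \<Rightarrow> ('a set \<Rightarrow> nat list) \<Rightarrow> bool" where
  "valid_seq V r par c1 k seq \<longleftrightarrow> seq V = [] \<and>
    (\<forall>R. canonical V r par c1 k R \<longrightarrow>
      (\<exists>f. bij_betw f (components V par (R - CR r par c1 k R))
                     {1..card (components V par (R - CR r par c1 k R))} \<and>
           (\<forall>Q\<in>components V par (R - CR r par c1 k R). seq Q = seq R @ [f Q])))"

definition Sv :: "'a set \<Rightarrow> 'a \<Rightarrow> ('a \<Rightarrow> 'a) \<Rightarrow> ('a \<Rightarrow> 'a) \<Rightarrow> nat \<Rightarrow> ('a set \<Rightarrow> nat list) \<Rightarrow> 'a \<Rightarrow> nat list" where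
  "Sv V r par c1 k seq v = seq (Tv V r par c1 k v)"

definition route :: "'a set \<Rightarrow> 'a \<Rightarrow> ('a \<Rightarrow> 'a) \<Rightarrow> ('a \<Rightarrow> 'a) \<Rightarrow> nat \<Rightarrow> 'a \<Rightarrow> 'a \<Rightarrow> 'a" where
  "route V r par c1 k u v =
    (let C = CR r par c1 k (Tv V r par c1 k u) in
     if anc par u v then
       (let x = (THE x. x \<in> C \<and> anc par x v \<and> (\<forall>y. y \<in> C \<and> anc par y v \<longrightarrow> anc par y x))
        in if x = v then x else (THE w. child r par w x \<and> anc par w v))
     else
       (let x = (THE x. x \<in> C \<and> anc par v x \<and> anc par x u \<and>
                   (\<forall>y. y \<in> C \<and> anc par v y \<and> anc par y u \<longrightarrow> anc par x y))
        in if x = v then x else par x))"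

end

(*
  Every vertex y lies in C_R for exactly one canonical R = T^y; the canonical subtrees containing
  y form a chain, each obtained from the previous one as a component of R - C_R, and their
  sequences extend one another by one entry at a time. Since components are numbered injectively,
  a canonical subtree is determined by its sequence.

  The key fact is a boundary property: if R is canonical, z is in R and a child z' of z is not,
  then z is in C_R. Indeed z' lies in C_P for the canonical P of which R is a component; the
  deepest vertex a of C_P above z' reaches z' by leftmost edges after the first one, the child of a
  towards z is rt(R), and z is the last vertex l(R) of the leftmost path of R, because its leftmost
  child z' leaves R. Together with rt(R) in C_R, every edge leaving T^u has its inner end in C_{T^u}
  and its outer end in C of a neighbouring canonical subtree.

  Hence a routing step from u towards v either starts with v in C_{T^u} (then S_u = S_v), or lands
  in C_Q for the component Q of T^u - C_{T^u} containing v (then S_{u'} = S_u j is a prefix of S_v),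
  or, when v is outside T^u, lands in C_P for the parent P of T^u (then S_u = S_{u'} j is not a
  prefix of S_v). The three claims are then facts about lists.
*)

theory Submission
  imports Defs
begin

section \<open>Ancestors and paths\<close>

lemma anc_refl [simp]: "anc par v v"
  unfolding anc_def by (rule exI[of _ 0]) simp

lemma anc_par [simp]: "anc par (par v) v"
  unfolding anc_def by (rule exI[of _ 1]) simp

lemma funpow_apply_add: "(f ^^ m) ((f ^^ n) x) = (f ^^ (m + n)) x"
  by (simp add: funpow_add)

lemma anc_trans: "anc par a b \<Longrightarrow> anc par b c \<Longrightarrow> anc par a c"
  unfolding anc_def by (metis funpow_apply_add)

lemma anc_par_strict:
  assumes "anc par a w" "a \<noteq> w"
  shows "anc par a (par w)"
proof -
  obtain n where n: "(par ^^ n) w = a" using assms(1) unfolding anc_def by blast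
  with assms(2) obtain m where "n = Suc m" by (cases n) auto
  with n have "(par ^^ m) (par w) = a" by (simp add: funpow_swap1)
  then show ?thesis unfolding anc_def by blast
qed

lemma anc_linear:
  assumes "anc par a w" "anc par b w"
  shows "anc par a b \<or> anc par b a"
proof -
  obtain i j where a: "(par ^^ i) w = a" and b: "(par ^^ j) w = b"
    using assms unfolding anc_def by blast
  show ?thesis
  proof (cases "i \<le> j")
    case True
    then have "(par ^^ (j - i)) a = b"
      using a b funpow_apply_add[where f=par and m="j - i" and n=i and x=w] by simp
    then show ?thesis unfolding anc_def by blast
  next
    case False
    then have "(par ^^ (i - j)) b = a"
      using a b funpow_apply_add[where f=par and m="i - j" and n=j and x=w] by simp
    then show ?thesis unfolding anc_def by blast
  qed
qed

lemma anc_least_power: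
  assumes "anc par v w"
  obtains n where "(par ^^ n) w = v" "\<forall>j<n. (par ^^ j) w \<noteq> v"
proof
  have "\<exists>n. (par ^^ n) w = v" using assms unfolding anc_def .
  then show "(par ^^ (LEAST n. (par ^^ n) w = v)) w = v" by (rule LeastI_ex)
  show "\<forall>j<(LEAST n. (par ^^ n) w = v). (par ^^ j) w \<noteq> v" using not_less_Least by blast
qed

lemma finite_chain_has_greatest:
  assumes "finite S" "S \<noteq> {}" "\<forall>a\<in>S. \<forall>b\<in>S. R a b \<or> R b a"
    and trans: "\<And>a b c. R a b \<Longrightarrow> R b c \<Longrightarrow> R a c"
  shows "\<exists>m\<in>S. \<forall>y\<in>S. R y m"
  using assms(1-3)
proof (induction S rule: finite_ne_induct)
  case (insert a S)
  then obtain m where m: "m \<in> S" "\<forall>y\<in>S. R y m" by auto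
  have total: "R x y \<or> R y x" if "x \<in> insert a S" "y \<in> insert a S" for x y
    using insert.prems that by blast
  show ?case
  proof (cases "R m a")
    case True
    have "R y a" if "y \<in> insert a S" for y
    proof (cases "y = a")
      case True
      then show ?thesis using total[OF that that] by blast
    next
      case False
      then have "R y m" using that m by blast
      then show ?thesis using \<open>R m a\<close> by (rule trans)
    qed
    then show ?thesis by blast
  next
    case False
    then have "R a m" using total m by blast
    then show ?thesis using m by blast
  qed
qed simp

lemma leftmost_path_iterate:
  assumes "(par ^^ n) w = v" "\<forall>j<n. (par ^^ j) w \<noteq> v"
    and "\<forall>x. anc par v x \<and> anc par x w \<and> x \<noteq> v \<longrightarrow> leftmost r par c1 x"
  shows "i \<le> n \<Longrightarrow> (par ^^ (n - i)) w = (c1 ^^ i) v"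
proof (induction i)
  case 0
  then show ?case using assms(1) by simp
next
  case (Suc i)
  define y where "y = (par ^^ (n - Suc i)) w"
  have "(par ^^ Suc i) y = (par ^^ n) w"
    using Suc.prems funpow_apply_add[where f=par and m="Suc i" and n="n - Suc i" and x=w] unfolding y_def by simp
  then have "anc par v y" using assms(1) unfolding anc_def by metis
  moreover have "anc par y w" unfolding y_def anc_def by blast
  moreover have "y \<noteq> v" using assms(2) Suc.prems unfolding y_def by simp
  ultimately have "c1 (par y) = y" using assms(3) unfolding leftmost_def by blast
  moreover have "par y = (par ^^ (n - i)) w"
    using Suc.prems funpow_apply_add[where f=par and m="1" and n="n - Suc i" and x=w] unfolding y_def by (simp add: Suc_diff_Suc)
  moreover have "(par ^^ (n - i)) w = (c1 ^^ i) v" using Suc by simp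
  ultimately have "y = (c1 ^^ Suc i) v" by simp
  then show ?case unfolding y_def .
qed

lemma onP_linear:
  assumes "onP r par c1 R v w1" "onP r par c1 R v w2"
  shows "anc par w1 w2 \<or> anc par w2 w1"
proof -
  have *: "anc par w1 w2"
    if "onP r par c1 R v w1" "onP r par c1 R v w2" "(par ^^ n1) w1 = v" "\<forall>j<n1. (par ^^ j) w1 \<noteq> v"
       "(par ^^ n2) w2 = v" "\<forall>j<n2. (par ^^ j) w2 \<noteq> v" "n1 \<le> n2" for w1 w2 n1 n2
  proof -
    have "(par ^^ (n1 - n1)) w1 = (c1 ^^ n1) v"
      by (rule leftmost_path_iterate[where r=r, OF that(3,4)]) (use that(1) in \<open>simp_all add: onP_def\<close>)
    moreover have "(par ^^ (n2 - n1)) w2 = (c1 ^^ n1) v"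
      by (rule leftmost_path_iterate[where r=r, OF that(5,6) _ that(7)]) (use that(2) in \<open>simp add: onP_def\<close>)
    ultimately have "(par ^^ (n2 - n1)) w2 = w1" by simp
    then show ?thesis unfolding anc_def by blast
  qed
  have "anc par v w1" "anc par v w2" using assms unfolding onP_def by blast+
  obtain n1 where n1: "(par ^^ n1) w1 = v" "\<forall>j<n1. (par ^^ j) w1 \<noteq> v"
    using anc_least_power[OF \<open>anc par v w1\<close>] .
  obtain n2 where n2: "(par ^^ n2) w2 = v" "\<forall>j<n2. (par ^^ j) w2 \<noteq> v"
    using anc_least_power[OF \<open>anc par v w2\<close>] .
  show ?thesis
  proof (cases "n1 \<le> n2")
    case True
    from *[OF assms n1 n2 True] show ?thesis ..
  next
    case False
    then have "n2 \<le> n1" by simp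
    from *[OF assms(2,1) n2 n1 this] show ?thesis ..
  qed
qed

lemma on_path_sym: "on_path par x y z \<longleftrightarrow> on_path par y x z"
  unfolding on_path_def by blast

lemma on_path_split_anc:
  assumes "on_path par x y z" "anc par z x"
  shows "on_path par x c z \<or> on_path par c y z"
proof (cases "\<forall>w. anc par w x \<and> anc par w c \<longrightarrow> anc par w z")
  case True
  then show ?thesis using assms(2) unfolding on_path_def by simp
next
  case False
  then obtain w1 where w1: "anc par w1 x" "anc par w1 c" "\<not> anc par w1 z" by blast
  then have "anc par z w1" using anc_linear[OF w1(1) assms(2)] by blast
  then have zc: "anc par z c" using w1(2) by (rule anc_trans)
  have "anc par w z" if w: "anc par w c" "anc par w y" for w
  proof (cases "anc par w w1")
    case True
    then have "anc par w x" using w1(1) by (rule anc_trans)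
    then show ?thesis using w(2) assms(1) unfolding on_path_def by blast
  next
    case False
    then have "anc par w1 w" using anc_linear[OF w(1) w1(2)] by blast
    then have "anc par w1 y" using w(2) by (rule anc_trans)
    then show ?thesis using w1 assms(1) unfolding on_path_def by blast
  qed
  then have "on_path par c y z" using zc unfolding on_path_def by blast
  then show ?thesis ..
qed

lemma on_path_split:
  assumes "on_path par x y z"
  shows "on_path par x c z \<or> on_path par c y z"
proof -
  have "anc par z x \<or> anc par z y" using assms unfolding on_path_def by blast
  then show ?thesis
  proof
    assume "anc par z x"
    from on_path_split_anc[OF assms this] show ?thesis .
  next
    assume "anc par z y"
    have "on_path par y x z" using assms by (simp add: on_path_sym)
    from on_path_split_anc[OF this \<open>anc par z y\<close>]
    have "on_path par y c z \<or> on_path par c x z" .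
    then show ?thesis using on_path_sym[of par y c z] on_path_sym[of par c x z] by blast
  qed
qed

lemma subtree_Un:
  assumes "is_subtree V par Q" "is_subtree V par W" "c \<in> Q" "c \<in> W"
  shows "is_subtree V par (Q \<union> W)"
proof -
  have Q: "z \<in> Q" if "x \<in> Q" "y \<in> Q" "on_path par x y z" for x y z
    using assms(1) that unfolding is_subtree_def by blast
  have W: "z \<in> W" if "x \<in> W" "y \<in> W" "on_path par x y z" for x y z
    using assms(2) that unfolding is_subtree_def by blast
  have mixed: "z \<in> Q \<union> W" if "x \<in> Q" "y \<in> W" "on_path par x y z" for x y z
    using on_path_split[OF that(3), of c] Q[OF that(1) assms(3)] W[OF assms(4) that(2)] by blast
  show ?thesis
    unfolding is_subtree_def
  proof (intro conjI ballI allI impI)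
    show "Q \<union> W \<subseteq> V" "Q \<union> W \<noteq> {}"
      using assms unfolding is_subtree_def by auto
  next
    fix x y z assume xy: "x \<in> Q \<union> W" "y \<in> Q \<union> W" and z: "on_path par x y z"
    have z': "on_path par y x z" using z by (simp add: on_path_sym)
    from xy consider "x \<in> Q" "y \<in> Q" | "x \<in> W" "y \<in> W" | "x \<in> Q" "y \<in> W" | "x \<in> W" "y \<in> Q"
      by blast
    then show "z \<in> Q \<union> W"
    proof cases
      case 1
      from Q[OF 1 z] show ?thesis ..
    next
      case 2
      from W[OF 2 z] show ?thesis ..
    next
      case 3
      from mixed[OF 3 z] show ?thesis .
    next
      case 4
      from mixed[OF 4(2,1) z'] show ?thesis .
    qed
  qed
qed

section \<open>Rooted trees, subtrees and components\<close>

locale rtree =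
  fixes V :: "'a set" and r :: 'a and par :: "'a \<Rightarrow> 'a"
  assumes tree: "is_rooted_tree V r par"
begin

lemma finite_V: "finite V"
  and root_in_V: "r \<in> V"
  and par_root: "par r = r"
  and par_in_V: "v \<in> V \<Longrightarrow> par v \<in> V"
  and root_anc: "v \<in> V \<Longrightarrow> anc par r v"
  using tree unfolding is_rooted_tree_def by auto

lemma funpow_par_root: "(par ^^ n) r = r"
  by (induction n) (simp_all add: par_root)

lemma anc_in_V: "anc par u v \<Longrightarrow> v \<in> V \<Longrightarrow> u \<in> V"
proof -
  have "(par ^^ n) v \<in> V" if "v \<in> V" for n v
    using that by (induction n) (simp_all add: par_in_V)
  then show "anc par u v \<Longrightarrow> v \<in> V \<Longrightarrow> u \<in> V" unfolding anc_def by blast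
qed

text \<open>Mutual ancestors make v periodic under par; as par reaches the root from v, v is the root.\<close>
lemma anc_antisym:
  assumes "anc par u v" "anc par v u" "v \<in> V"
  shows "u = v"
proof -
  obtain n m where n: "(par ^^ n) v = u" and m: "(par ^^ m) u = v"
    using assms(1,2) unfolding anc_def by blast
  obtain k where k: "(par ^^ k) v = r" using root_anc[OF assms(3)] unfolding anc_def by blast
  have cycle: "(par ^^ (m + n)) v = v"
    using n m funpow_apply_add[where f=par and m=m and n=n and x=v] by simp
  have periodic: "(par ^^ ((m + n) * j)) v = v" for j
  proof (induction j)
    case (Suc j)
    then show ?case
      using cycle funpow_apply_add[where f=par and m="m + n" and n="(m + n) * j" and x=v] by simp
  qed simp
  show ?thesis
  proof (cases "m + n = 0")
    case True
    then show ?thesis using n by simp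
  next
    case False
    then have "1 \<le> m + n" by linarith
    then have "1 * k \<le> (m + n) * k" by (rule mult_le_mono1)
    then have "(par ^^ ((m + n) * k)) v = (par ^^ ((m + n) * k - k)) r"
      using k funpow_apply_add[where f=par and m="(m + n) * k - k" and n=k and x=v] by simp
    then have "v = r" using periodic[of k] funpow_par_root by simp
    then show ?thesis using n funpow_par_root by simp
  qed
qed

lemma not_anc_par:
  assumes "w \<in> V" "w \<noteq> r"
  shows "\<not> anc par w (par w)"
proof
  assume "anc par w (par w)"
  then have par_w: "par w = w" using anc_antisym[OF anc_par _ assms(1)] by blast
  have "(par ^^ n) w = w" for n by (induction n) (simp_all add: par_w)
  moreover obtain n where "(par ^^ n) w = r" using root_anc[OF assms(1)] unfolding anc_def by blast
  ultimately show False using assms(2) by simp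
qed

lemma child_ne: "child r par w x \<Longrightarrow> w \<in> V \<Longrightarrow> w \<noteq> x"
  using not_anc_par[of w] unfolding child_def by auto

lemma child_anc: "child r par w x \<Longrightarrow> anc par x w"
  unfolding child_def by auto

lemma child_anc_unique:
  assumes "child r par w x" "child r par w' x" "anc par w v" "anc par w' v" "v \<in> V"
  shows "w = w'"
proof -
  have "w \<in> V" "w' \<in> V" using assms(3-5) anc_in_V by blast+
  have *: "w = w'" if "anc par w w'" "child r par w x" "child r par w' x" "w \<in> V" for w w'
  proof (rule ccontr)
    assume "w \<noteq> w'"
    then have "anc par w (par w)" using anc_par_strict[OF that(1)] that(2,3) unfolding child_def by simp
    then show False using not_anc_par that(2,4) unfolding child_def by blast
  qed
  from anc_linear[OF assms(3,4)] show ?thesis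
  proof
    assume "anc par w w'"
    from *[OF this assms(1,2) \<open>w \<in> V\<close>] show ?thesis .
  next
    assume "anc par w' w"
    from *[OF this assms(2,1) \<open>w' \<in> V\<close>] show ?thesis by simp
  qed
qed

lemma child_toward:
  assumes "anc par x v" "x \<noteq> v" "v \<in> V"
  shows "\<exists>!w. child r par w x \<and> anc par w v"
proof -
  obtain n where n: "(par ^^ n) v = x" "\<forall>j<n. (par ^^ j) v \<noteq> x"
    using anc_least_power[OF assms(1)] .
  then obtain m where m: "n = Suc m" using assms(2) by (cases n) auto
  define w where "w = (par ^^ m) v"
  have "par w = x" "w \<noteq> x" using n m unfolding w_def by auto
  then have "child r par w x" using par_root unfolding child_def by auto
  moreover have "anc par w v" unfolding w_def anc_def by blast
  ultimately show ?thesis using child_anc_unique assms(3) by blast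
qed

lemma the_deepest_eq:
  assumes "P m" "\<forall>y. P y \<longrightarrow> anc par y m" "m \<in> V"
  shows "(THE x. P x \<and> (\<forall>y. P y \<longrightarrow> anc par y x)) = m"
proof (rule the_equality)
  fix x assume x: "P x \<and> (\<forall>y. P y \<longrightarrow> anc par y x)"
  show "x = m" by (rule anc_antisym) (use x assms in auto)
qed (use assms in blast)

lemma the_highest_eq:
  assumes "P m" "\<forall>y. P y \<longrightarrow> anc par m y" "m \<in> V"
  shows "(THE x. P x \<and> (\<forall>y. P y \<longrightarrow> anc par x y)) = m"
proof (rule the_equality)
  fix x assume x: "P x \<and> (\<forall>y. P y \<longrightarrow> anc par x y)"
  show "x = m" by (rule anc_antisym) (use x assms in auto)
qed (use assms in blast)

lemma finite_chain_has_deepest: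
  assumes "finite S" "S \<noteq> {}" "\<forall>a\<in>S. \<forall>b\<in>S. anc par a b \<or> anc par b a"
  shows "\<exists>m\<in>S. \<forall>y\<in>S. anc par y m"
  by (rule finite_chain_has_greatest[OF assms]) (rule anc_trans)

lemma finite_chain_has_highest:
  assumes "finite S" "S \<noteq> {}" "\<forall>a\<in>S. \<forall>b\<in>S. anc par a b \<or> anc par b a"
  shows "\<exists>m\<in>S. \<forall>y\<in>S. anc par m y"
proof -
  have total: "\<forall>a\<in>S. \<forall>b\<in>S. anc par b a \<or> anc par a b" using assms(3) by blast
  have trans: "anc par c a" if "anc par b a" "anc par c b" for a b c
    using that(2,1) by (rule anc_trans)
  show ?thesis
    using finite_chain_has_greatest[of S "\<lambda>a b. anc par b a", OF assms(1,2) total trans] .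
qed

lemma subtree_convex:
  assumes "is_subtree V par R" "a \<in> R" "b \<in> R" "anc par a s" "anc par s b"
  shows "s \<in> R"
proof -
  have "a \<in> V" using assms(1,2) unfolding is_subtree_def by blast
  have "anc par w s" if w: "anc par w a" "anc par w b" for w
  proof (cases "anc par w s")
    case False
    then have "anc par s w" using anc_linear[OF w(2) assms(5)] by blast
    then have "anc par s a" using w(1) by (rule anc_trans)
    then have "s = a" using anc_antisym assms(4) \<open>a \<in> V\<close> by blast
    then show ?thesis using w(1) by simp
  qed
  then have "on_path par a b s" using assms(5) unfolding on_path_def by blast
  then show ?thesis using assms(1-3) unfolding is_subtree_def by blast
qed

lemma subtree_singleton: "v \<in> V \<Longrightarrow> is_subtree V par {v}"
  unfolding is_subtree_def on_path_def using anc_antisym by auto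

definition segment :: "'a \<Rightarrow> 'a \<Rightarrow> 'a set" where
  "segment a b = {s. anc par a s \<and> anc par s b}"

lemma segment_subtree:
  assumes "anc par a b" "b \<in> V"
  shows "is_subtree V par (segment a b)"
  unfolding is_subtree_def
proof (intro conjI ballI allI impI)
  show "segment a b \<subseteq> V" unfolding segment_def using anc_in_V[OF _ assms(2)] by blast
  show "segment a b \<noteq> {}" unfolding segment_def using assms(1) by auto
next
  fix x y s assume x: "x \<in> segment a b" and y: "y \<in> segment a b" and s: "on_path par x y s"
  have "anc par x b" "anc par y b" using x y unfolding segment_def by auto
  moreover have "anc par s x \<or> anc par s y" using s unfolding on_path_def by blast
  ultimately have "anc par s b" using anc_trans by metis
  moreover have "anc par a s" using s x y unfolding on_path_def segment_def by blast
  ultimately show "s \<in> segment a b" unfolding segment_def by simp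
qed

lemma segment_edge: "b \<in> V \<Longrightarrow> segment (par b) b = {par b, b}"
  unfolding segment_def using anc_par_strict[of par _ b] anc_antisym[of _ "par b"] par_in_V by auto

lemma component_subtree: "Q \<in> components V par S \<Longrightarrow> Q \<subseteq> S \<and> is_subtree V par Q"
  unfolding components_def by blast

lemma component_maximal:
  assumes "Q \<in> components V par S" "is_subtree V par W" "W \<subseteq> S" "c \<in> Q" "c \<in> W"
  shows "W \<subseteq> Q"
proof -
  have Q: "Q \<subseteq> S" "is_subtree V par Q" using component_subtree[OF assms(1)] by auto
  have "Q \<union> W = Q"
    using assms(1) subtree_Un[OF Q(2) assms(2,4,5)] Q(1) assms(3) unfolding components_def by blast
  then show ?thesis by blast
qed

lemma component_unique:
  assumes "Q1 \<in> components V par S" "Q2 \<in> components V par S" "v \<in> Q1" "v \<in> Q2"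
  shows "Q1 = Q2"
  using component_maximal[OF assms(1) _ _ assms(3,4)] component_maximal[OF assms(2) _ _ assms(4,3)]
    component_subtree[OF assms(1)] component_subtree[OF assms(2)] by blast

lemma component_exists:
  assumes "S \<subseteq> V" "v \<in> S"
  obtains Q where "Q \<in> components V par S" "v \<in> Q"
proof -
  define F where "F = {W. W \<subseteq> S \<and> is_subtree V par W \<and> v \<in> W}"
  have "F \<subseteq> Pow V" unfolding F_def using assms(1) by blast
  then have "finite F" using finite_V by (simp add: finite_subset)
  moreover have "{v} \<in> F" unfolding F_def using subtree_singleton assms by auto
  then have "F \<noteq> {}" by blast
  ultimately obtain W where W: "W \<in> F" "\<forall>B\<in>F. W \<subseteq> B \<longrightarrow> W = B"
    using finite_has_maximal by blast
  then have "W \<in> components V par S" unfolding components_def F_def by blast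
  then show ?thesis using that W(1) unfolding F_def by blast
qed

lemma segment_in_component:
  assumes "Q \<in> components V par S" "anc par a b" "b \<in> V" "segment a b \<subseteq> S" "a \<in> Q \<or> b \<in> Q"
  shows "segment a b \<subseteq> Q"
proof -
  have "a \<in> segment a b" "b \<in> segment a b" using assms(2) unfolding segment_def by auto
  then show ?thesis
    using component_maximal[OF assms(1) segment_subtree[OF assms(2,3)] assms(4)] assms(5) by blast
qed

lemma component_neighbour:
  assumes "Q \<in> components V par S" "w \<in> Q" "w \<in> V" "y \<in> V" "y \<notin> Q" "par y = w \<or> par w = y"
  shows "y \<notin> S"
proof
  assume "y \<in> S"
  from assms(6) obtain b where b: "b \<in> V" "segment (par b) b = {w, y}"
  proof
    assume "par y = w"
    then show ?thesis using that[of y] segment_edge[OF assms(4)] assms(4) by auto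
  next
    assume "par w = y"
    then show ?thesis using that[of w] segment_edge[OF assms(3)] assms(3) by auto
  qed
  have "w \<in> S" using assms(1,2) component_subtree by blast
  then have "segment (par b) b \<subseteq> S" using b(2) \<open>y \<in> S\<close> by simp
  moreover have "w \<in> {par b, b}" using b(2) segment_edge[OF b(1)] by simp
  then have "par b \<in> Q \<or> b \<in> Q" using assms(2) by auto
  ultimately have "segment (par b) b \<subseteq> Q"
    using segment_in_component[OF assms(1) anc_par b(1)] by blast
  then show False using b(2) assms(5) by blast
qed

lemma subtree_rt:
  assumes "is_subtree V par R"
  shows "rt par R \<in> R" "\<forall>y\<in>R. anc par (rt par R) y"
proof -
  have RV: "R \<subseteq> V" "R \<noteq> {}" using assms unfolding is_subtree_def by auto
  then obtain x where x: "x \<in> R" by blast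
  define A where "A = {a \<in> R. anc par a x}"
  have "A \<subseteq> V" using RV(1) unfolding A_def by blast
  then have "finite A" using finite_subset finite_V by blast
  moreover have "A \<noteq> {}" using x unfolding A_def by auto
  moreover have "\<forall>a\<in>A. \<forall>b\<in>A. anc par a b \<or> anc par b a"
    using anc_linear[of par _ x] unfolding A_def by blast
  ultimately obtain m where m: "m \<in> A" "\<forall>a\<in>A. anc par m a"
    using finite_chain_has_highest by blast
  have mR: "m \<in> R" "anc par m x" using m(1) unfolding A_def by auto
  have mV: "m \<in> V" using mR(1) RV(1) by blast
  have top: "anc par m y" if y: "y \<in> R" for y
  proof -
    define CA where "CA = {a. anc par a m \<and> anc par a y}"
    have "CA \<subseteq> V" using anc_in_V[OF _ mV] unfolding CA_def by blast
    then have "finite CA" using finite_subset finite_V by blast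
    moreover have "r \<in> CA" using root_anc mV y RV(1) unfolding CA_def by blast
    then have "CA \<noteq> {}" by blast
    moreover have "\<forall>a\<in>CA. \<forall>b\<in>CA. anc par a b \<or> anc par b a"
      using anc_linear[of par _ m] unfolding CA_def by blast
    ultimately obtain z where z: "z \<in> CA" "\<forall>a\<in>CA. anc par a z"
      using finite_chain_has_deepest by blast
    have zm: "anc par z m" "anc par z y" using z(1) unfolding CA_def by auto
    have "on_path par m y z" using zm z(2) unfolding on_path_def CA_def by blast
    then have "z \<in> R" using assms mR(1) y unfolding is_subtree_def by blast
    moreover have "anc par z x" using anc_trans[OF zm(1) mR(2)] .
    ultimately have "anc par m z" using m(2) unfolding A_def by blast
    then have "z = m" using anc_antisym[OF zm(1) _ mV] by blast
    then show ?thesis using zm(2) by simp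
  qed
  have "rt par R = m"
    unfolding rt_def Ball_def using mR(1) top mV by (intro the_highest_eq) auto
  then show "rt par R \<in> R" "\<forall>y\<in>R. anc par (rt par R) y" using mR(1) top by auto
qed

lemma rt_eq_if_par_notin:
  assumes "is_subtree V par Q" "w \<in> Q" "par w \<notin> Q"
  shows "rt par Q = w"
proof (rule ccontr)
  assume "rt par Q \<noteq> w"
  have "anc par (rt par Q) w" using subtree_rt(2)[OF assms(1)] assms(2) by blast
  then have "anc par (rt par Q) (par w)"
    using \<open>rt par Q \<noteq> w\<close> by (rule anc_par_strict)
  then have "par w \<in> Q" by (rule subtree_convex[OF assms(1) subtree_rt(1)[OF assms(1)] assms(2) _ anc_par])
  then show False using assms(3) by simp
qed

lemma rt_sub:
  assumes "w \<in> R" "R \<subseteq> V"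
  shows "rt par (sub par R w) = w"
  unfolding rt_def Ball_def sub_def using assms by (intro the_highest_eq) auto

end

section \<open>Canonical subtrees\<close>

locale canonical_tree = rtree +
  fixes c1 :: "'a \<Rightarrow> 'a" and k :: nat
begin

abbreviation C :: "'a set \<Rightarrow> 'a set" where
  "C R \<equiv> CR r par c1 k R"

abbreviation can :: "'a set \<Rightarrow> bool" where
  "can R \<equiv> canonical V r par c1 k R"

lemma onP_refl:
  assumes "v \<in> R" "R \<subseteq> V"
  shows "onP r par c1 R v v"
proof -
  have "v \<in> V" using assms by blast
  then have "x = v" if "anc par v x" "anc par x v" for x using anc_antisym that by blast
  then show ?thesis unfolding onP_def using assms(1) by auto
qed

lemma lend_onP:
  assumes "R \<subseteq> V" "v \<in> R"
  shows "onP r par c1 R v (lend r par c1 R v)"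
proof -
  define S where "S = {w. onP r par c1 R v w}"
  have "S \<subseteq> V" using assms(1) unfolding S_def onP_def by blast
  then have "finite S" using finite_subset finite_V by blast
  moreover have "S \<noteq> {}" using onP_refl[OF assms(2,1)] unfolding S_def by blast
  moreover have "\<forall>a\<in>S. \<forall>b\<in>S. anc par a b \<or> anc par b a"
    unfolding S_def using onP_linear[of r par c1 R v] by auto
  ultimately obtain m where m: "m \<in> S" "\<forall>w\<in>S. anc par w m"
    using finite_chain_has_deepest by blast
  have "lend r par c1 R v = m"
    unfolding lend_def
      using m \<open>S \<subseteq> V\<close> unfolding S_def by (intro the_deepest_eq) auto
  then show ?thesis using m unfolding S_def by auto
qed

lemma lend_eq:
  assumes "is_subtree V par R" "onP r par c1 R v z" "c1 z \<notin> R"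
  shows "lend r par c1 R v = z"
  unfolding lend_def
proof (rule the_deepest_eq)
  have RV: "R \<subseteq> V" using assms(1) unfolding is_subtree_def by blast
  have z: "z \<in> R" "anc par v z" using assms(2) unfolding onP_def by auto
  show "z \<in> V" using z(1) RV by blast
  show "onP r par c1 R v z" by (rule assms(2))
  show "\<forall>w. onP r par c1 R v w \<longrightarrow> anc par w z"
  proof (intro allI impI)
    fix w assume w: "onP r par c1 R v w"
    have wR: "w \<in> R" "anc par v w" using w unfolding onP_def by auto
    show "anc par w z"
    proof (rule ccontr)
      assume "\<not> anc par w z"
      then have zw: "anc par z w" "z \<noteq> w" using onP_linear[OF w assms(2)] by auto
      obtain t where t: "child r par t z" "anc par t w"
        using child_toward[OF zw] wR(1) RV by blast
      have zt: "anc par z t" using t(1) unfolding child_def by auto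
      have "t \<noteq> v"
      proof
        assume "t = v"
        then have "anc par t (par t)" using z(2) t(1) unfolding child_def by simp
        then show False using not_anc_par t(1) anc_in_V[OF t(2)] wR(1) RV unfolding child_def by blast
      qed
      moreover have "anc par v t" using anc_trans[OF z(2) zt] .
      ultimately have "leftmost r par c1 t" using w t(2) unfolding onP_def by blast
      then have "c1 z = t" using t(1) unfolding leftmost_def child_def by auto
      moreover have "t \<in> R" using subtree_convex[OF assms(1) z(1) wR(1) zt t(2)] .
      ultimately show False using assms(3) by simp
    qed
  qed
qed

lemma bd_onP:
  assumes "R \<subseteq> V" "bd r par c1 R d v = Some b"
  shows "onP r par c1 R v b"
proof -
  define S where "S = {w. onP r par c1 R v w \<and> balanced r par c1 R d w}"
  have "S \<subseteq> V" using assms(1) unfolding S_def onP_def by blast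
  then have "finite S" using finite_subset finite_V by blast
  moreover have "S \<noteq> {}" using assms(2) unfolding S_def bd_def by (auto split: if_splits)
  moreover have "\<forall>a\<in>S. \<forall>b\<in>S. anc par a b \<or> anc par b a"
    unfolding S_def using onP_linear[of r par c1 R v] by auto
  ultimately obtain m where m: "m \<in> S" "\<forall>w\<in>S. anc par m w"
    using finite_chain_has_highest by blast
  have "b = m"
    using assms(2) the_highest_eq[of "\<lambda>w. onP r par c1 R v w \<and> balanced r par c1 R d w" m] m \<open>S \<subseteq> V\<close>
    unfolding S_def bd_def by (auto split: if_splits)
  then show ?thesis using m(1) unfolding S_def by blast
qed

definition leftmost_below :: "'a \<Rightarrow> 'a \<Rightarrow> bool" where
  "leftmost_below a y \<longleftrightarrow>
     (\<forall>s. anc par a s \<and> anc par s y \<and> s \<noteq> a \<and> par s \<noteq> a \<longrightarrow> leftmost r par c1 s)"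

lemma onP_leftmost_below: "onP r par c1 R v y \<Longrightarrow> leftmost_below v y"
  unfolding onP_def leftmost_below_def by blast

lemma leftmost_below_mono:
  assumes "leftmost_below a0 y" "anc par a0 a" "a \<in> V"
  shows "leftmost_below a y"
  unfolding leftmost_below_def
proof (intro allI impI)
  fix s assume s: "anc par a s \<and> anc par s y \<and> s \<noteq> a \<and> par s \<noteq> a"
  have "anc par a0 s" using anc_trans[OF assms(2)] s by blast
  moreover have "s \<noteq> a0"
  proof
    assume "s = a0"
    then have "a0 = a" using anc_antisym[OF assms(2) _ assms(3)] s by blast
    then show False using s \<open>s = a0\<close> by simp
  qed
  moreover have "par s \<noteq> a0"
  proof
    assume "par s = a0"
    have "anc par a (par s)" using anc_par_strict[of par a s] s by blast
    then have "a0 = a" using anc_antisym[OF assms(2) _ assms(3)] \<open>par s = a0\<close> by blast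
    then show False using s \<open>par s = a0\<close> by simp
  qed
  ultimately show "leftmost r par c1 s" using assms(1) s unfolding leftmost_below_def by blast
qed

lemma leftmost_below_parent:
  assumes "onP r par c1 R w x" "child r par w b" "w \<in> V"
  shows "leftmost_below b x"
  unfolding leftmost_below_def
proof (intro allI impI)
  fix s assume s: "anc par b s \<and> anc par s x \<and> s \<noteq> b \<and> par s \<noteq> b"
  have wx: "anc par w x" and pw: "par w = b" using assms(1,2) unfolding onP_def child_def by auto
  have "\<not> anc par s w"
  proof
    assume sw: "anc par s w"
    have "s \<noteq> w" using s pw by auto
    then have "anc par s b" using anc_par_strict[OF sw] pw by simp
    then show False using anc_antisym[of s b] s par_in_V[OF assms(3)] pw by auto
  qed
  then have "anc par w s" "s \<noteq> w" using anc_linear[of par s x w] s wx by auto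
  then show "leftmost r par c1 s" using assms(1) s unfolding onP_def by blast
qed

lemma leftmost_below_child:
  assumes "leftmost_below a y" "child r par q a" "anc par q y" "y \<in> V"
  shows "\<forall>s. anc par q s \<and> anc par s y \<and> s \<noteq> q \<longrightarrow> leftmost r par c1 s"
proof (intro allI impI)
  fix s assume s: "anc par q s \<and> anc par s y \<and> s \<noteq> q"
  have qV: "q \<in> V" using anc_in_V[OF assms(3,4)] .
  have aq: "anc par a q" "q \<noteq> a" "a \<in> V" using child_anc[OF assms(2)] child_ne[OF assms(2) qV]
    anc_in_V[OF child_anc[OF assms(2)] qV] by auto
  have as: "anc par a s" using anc_trans[OF aq(1)] s by blast
  have "s \<noteq> a"
  proof
    assume "s = a"
    then have "anc par q a" using s by simp
    then show False using anc_antisym[OF _ aq(1,3)] aq(2) by blast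
  qed
  moreover have "par s \<noteq> a"
  proof
    assume "par s = a"
    then have "s \<noteq> r" using par_root \<open>s \<noteq> a\<close> by auto
    then have "child r par s a" using \<open>par s = a\<close> unfolding child_def by simp
    then show False using child_anc_unique[OF _ assms(2) _ assms(3,4)] s by blast
  qed
  ultimately show "leftmost r par c1 s" using assms(1) as s unfolding leftmost_below_def by blast
qed

lemma inCV_leftmost_below:
  assumes "inCV r par c1 R d x" "R \<subseteq> V"
  shows "x \<in> R \<and> (onP r par c1 R (rt par R) x \<or>
           (\<exists>a. inCV r par c1 R d a \<and> anc par a x \<and> a \<noteq> x \<and> leftmost_below a x))"
  using assms
proof (induction rule: inCV.induct)
  case (base R d b)
  then have "onP r par c1 R (rt par R) b" using bd_onP by blast
  then show ?case unfolding onP_def by blast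
next
  case (step R d b w x)
  have "sub par R w \<subseteq> V" using step.prems unfolding sub_def by blast
  then have IH: "x \<in> sub par R w \<and> (onP r par c1 (sub par R w) w x \<or>
      (\<exists>a. inCV r par c1 (sub par R w) d a \<and> anc par a x \<and> a \<noteq> x \<and> leftmost_below a x))"
    using step.IH rt_sub[OF step.hyps(2) step.prems] by simp
  have xR: "x \<in> R" "anc par w x" using IH unfolding sub_def by auto
  have wV: "w \<in> V" "par w = b" "w \<noteq> r"
    using step.hyps(2,3) step.prems unfolding child_def by auto
  have bCV: "inCV r par c1 R d b" using step.hyps(1) by (rule inCV.base)
  from IH consider "onP r par c1 (sub par R w) w x"
    | a where "inCV r par c1 (sub par R w) d a" "anc par a x" "a \<noteq> x" "leftmost_below a x"
    by blast
  then show ?case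
  proof cases
    case 1
    have bx: "anc par b x" using anc_trans[OF anc_par xR(2)] wV(2) by simp
    have "b \<noteq> x"
    proof
      assume "b = x"
      then have "anc par w (par w)" using xR(2) wV(2) by simp
      then show False using not_anc_par wV by blast
    qed
    moreover have "leftmost_below b x" using leftmost_below_parent[OF 1 step.hyps(3) wV(1)] .
    ultimately show ?thesis using xR(1) bx bCV by blast
  next
    case 2
    then have "inCV r par c1 R d a" using inCV.step[OF step.hyps(1,2,3)] by blast
    then show ?thesis using xR(1) 2 by blast
  qed
qed

lemma canonical_subtree: "can R \<Longrightarrow> is_subtree V par R"
proof (induction rule: canonical.induct)
  case top
  have "z \<in> V" if "x \<in> V" "y \<in> V" "on_path par x y z" for x y z
    using that anc_in_V[of z x] anc_in_V[of z y] unfolding on_path_def by blast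
  then show ?case using root_in_V unfolding is_subtree_def by blast
next
  case (comp R Q)
  then show ?case using component_subtree by blast
qed

lemma canonical_subset: "can R \<Longrightarrow> R \<subseteq> V"
  using canonical_subtree unfolding is_subtree_def by blast

lemma rt_in_C: "can R \<Longrightarrow> rt par R \<in> C R"
  unfolding CR_def using subtree_rt(1)[OF canonical_subtree] by auto

lemma C_eq_if_ne: "C R \<noteq> R \<Longrightarrow>
    C R = CV r par c1 R (real (card R) / real k) \<union> {lend r par c1 R (rt par R), rt par R}"
  unfolding CR_def by (auto split: if_splits)

lemma C_subset: assumes "can R" shows "C R \<subseteq> R"
proof -
  have RV: "R \<subseteq> V" using canonical_subset[OF assms] .
  have rt: "rt par R \<in> R" using subtree_rt(1)[OF canonical_subtree[OF assms]] .
  have "CV r par c1 R d \<subseteq> R" for d unfolding CV_def using inCV_leftmost_below RV by blast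
  moreover have "lend r par c1 R (rt par R) \<in> R" using lend_onP[OF RV rt] unfolding onP_def by blast
  ultimately show ?thesis using rt C_eq_if_ne by blast
qed

lemma C_leftmost_ancestor:
  assumes "can P" "C P \<noteq> P" "y \<in> C P" "y \<noteq> rt par P"
  obtains a where "a \<in> C P" "anc par a y" "a \<noteq> y" "leftmost_below a y"
    "\<forall>b\<in>C P. anc par b y \<and> b \<noteq> y \<longrightarrow> anc par b a"
proof -
  define d where "d = real (card P) / real k"
  have CP: "C P = CV r par c1 P d \<union> {lend r par c1 P (rt par P), rt par P}"
    using C_eq_if_ne[OF assms(2)] unfolding d_def .
  have PV: "P \<subseteq> V" using canonical_subset[OF assms(1)] .
  have rtP: "rt par P \<in> P" using subtree_rt(1)[OF canonical_subtree[OF assms(1)]] .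
  have "y \<in> CV r par c1 P d \<or> y = lend r par c1 P (rt par P)" using assms(3,4) CP by blast
  then have "onP r par c1 P (rt par P) y \<or>
      (\<exists>a. inCV r par c1 P d a \<and> anc par a y \<and> a \<noteq> y \<and> leftmost_below a y)"
    using inCV_leftmost_below[OF _ PV] lend_onP[OF PV rtP] unfolding CV_def by blast
  then obtain a0 where a0: "a0 \<in> C P" "anc par a0 y" "a0 \<noteq> y" "leftmost_below a0 y"
  proof
    assume "onP r par c1 P (rt par P) y"
    then show ?thesis using that[of "rt par P"] rt_in_C[OF assms(1)] assms(4) onP_leftmost_below
      unfolding onP_def by blast
  next
    assume "\<exists>a. inCV r par c1 P d a \<and> anc par a y \<and> a \<noteq> y \<and> leftmost_below a y"
    then show ?thesis using that CP unfolding CV_def by blast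
  qed
  define A where "A = {a \<in> C P. anc par a y \<and> a \<noteq> y}"
  have AV: "A \<subseteq> V" using C_subset[OF assms(1)] PV unfolding A_def by blast
  then have "finite A" using finite_subset finite_V by blast
  moreover have "A \<noteq> {}" using a0 unfolding A_def by blast
  moreover have "\<forall>a\<in>A. \<forall>b\<in>A. anc par a b \<or> anc par b a"
    using anc_linear[of par _ y] unfolding A_def by blast
  ultimately obtain a where a: "a \<in> A" "\<forall>b\<in>A. anc par b a"
    using finite_chain_has_deepest by blast
  have "a0 \<in> A" using a0 unfolding A_def by blast
  then have "leftmost_below a y" using leftmost_below_mono[OF a0(4)] a AV by blast
  then show ?thesis using that a unfolding A_def by blast
qed

text \<open>Below the deepest vertex a of C P above z, the path to z avoids C P, so it enters the
  component of z at the child of a.\<close>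
lemma component_rt_child:
  assumes "can P" "Q \<in> components V par (P - C P)" "z \<in> Q"
    and "a \<in> C P" "anc par a z" "\<forall>b\<in>C P. anc par b z \<longrightarrow> anc par b a"
    and "child r par q a" "anc par q z"
  shows "q \<in> Q" "rt par Q = q"
proof -
  have Q: "Q \<subseteq> P - C P" "is_subtree V par Q" using component_subtree[OF assms(2)] by auto
  have PV: "P \<subseteq> V" using canonical_subset[OF assms(1)] .
  have aP: "a \<in> P" using assms(4) C_subset[OF assms(1)] by blast
  have zV: "z \<in> V" "z \<in> P" using assms(3) Q(1) PV by auto
  have aV: "a \<in> V" using aP PV by blast
  have aq: "anc par a q" "q \<noteq> a"
    using child_anc[OF assms(7)] child_ne[OF assms(7) anc_in_V[OF assms(8) zV(1)]] by auto
  have "segment q z \<subseteq> P - C P"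
  proof
    fix s assume "s \<in> segment q z"
    then have s: "anc par q s" "anc par s z" unfolding segment_def by auto
    have as: "anc par a s" using anc_trans[OF aq(1) s(1)] .
    have "s \<notin> C P"
    proof
      assume "s \<in> C P"
      then have "anc par s a" using assms(6) s(2) by blast
      then have "s = a" using anc_antisym[OF _ as aV] by blast
      then have "anc par q a" using s(1) by simp
      then show False using anc_antisym[OF _ aq(1) aV] aq(2) by blast
    qed
    then show "s \<in> P - C P"
      using subtree_convex[OF canonical_subtree[OF assms(1)] aP zV(2) as s(2)] by blast
  qed
  then have "segment q z \<subseteq> Q"
    using segment_in_component[OF assms(2) assms(8) zV(1)] assms(3) by blast
  then show "q \<in> Q" using assms(8) anc_refl[of par q] unfolding segment_def by blast
  moreover have "par q \<notin> Q" using assms(4,7) Q(1) unfolding child_def by blast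
  ultimately show "rt par Q = q" using rt_eq_if_par_notin[OF Q(2)] by blast
qed

text \<open>The leftmost edge from z to z' leaves the component Q, so z is the end of the leftmost
  path from the root of Q.\<close>
lemma component_boundary_in_C:
  assumes "can P" "Q \<in> components V par (P - C P)" "z \<in> Q"
    and "child r par z' z" "z' \<in> V" "z' \<in> C P"
  shows "z \<in> C Q"
proof -
  have Q: "Q \<subseteq> P - C P" "is_subtree V par Q" using component_subtree[OF assms(2)] by auto
  have zP: "z \<in> P" "z \<notin> C P" using assms(3) Q(1) by auto
  have pz: "par z' = z" "z' \<noteq> r" using assms(4) unfolding child_def by auto
  have zV: "z \<in> V" using pz par_in_V assms(5) by blast
  have "z' \<noteq> rt par P"
  proof
    assume "z' = rt par P"
    then have "anc par z' (par z')"
      using subtree_rt(2)[OF canonical_subtree[OF assms(1)]] zP(1) pz(1) by simp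
    then show False using not_anc_par assms(5) pz(2) by blast
  qed
  moreover have "C P \<noteq> P" using zP by blast
  ultimately obtain a where a: "a \<in> C P" "anc par a z'" "a \<noteq> z'" "leftmost_below a z'"
    "\<forall>b\<in>C P. anc par b z' \<and> b \<noteq> z' \<longrightarrow> anc par b a"
    using C_leftmost_ancestor[OF assms(1) _ assms(6)] by blast
  have az: "anc par a z" using anc_par_strict[OF a(2,3)] pz(1) by simp
  have zz': "anc par z z'" using pz(1) by auto
  have deepest: "\<forall>b\<in>C P. anc par b z \<longrightarrow> anc par b a"
  proof (intro ballI impI)
    fix b assume b: "b \<in> C P" "anc par b z"
    have "b \<noteq> z'"
    proof
      assume "b = z'"
      then show False using b(2) pz not_anc_par assms(5) by blast
    qed
    then show "anc par b a" using a(5) b anc_trans[OF b(2) zz'] by blast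
  qed
  have "a \<noteq> z" using a(1) zP(2) by blast
  then obtain q where q: "child r par q a" "anc par q z" using child_toward[OF az _ zV] by blast
  have rtQ: "rt par Q = q" using component_rt_child(2)[OF assms(1,2,3) a(1) az deepest q(1,2)] .
  have "\<forall>s. anc par q s \<and> anc par s z' \<and> s \<noteq> q \<longrightarrow> leftmost r par c1 s"
    using leftmost_below_child[OF a(4) q(1) anc_trans[OF q(2) zz'] assms(5)] .
  then have onP: "onP r par c1 Q q z"
    unfolding onP_def using assms(3) q(2) anc_trans[OF _ zz'] by blast
  have "leftmost r par c1 z'"
    using a(2,3,4) \<open>a \<noteq> z\<close> pz(1) unfolding leftmost_below_def by auto
  then have "c1 z = z'" using pz unfolding leftmost_def by simp
  moreover have "z' \<notin> Q" using assms(6) Q(1) by blast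
  ultimately have "lend r par c1 Q q = z" using lend_eq[OF Q(2) onP] by simp
  then show ?thesis unfolding CR_def using rtQ assms(3) by simp
qed

lemma canonical_boundary:
  assumes "can R" "z \<in> R" "child r par z' z" "z' \<in> V" "z' \<notin> R"
  shows "z \<in> C R"
  using assms
proof (induction arbitrary: z rule: canonical.induct)
  case top
  then show ?case by simp
next
  case (comp P Q)
  have Q: "Q \<subseteq> P - C P" using component_subtree[OF comp.hyps(2)] by blast
  have zP: "z \<in> P" "z \<notin> C P" using comp.prems(1) Q by auto
  have z'P: "z' \<in> P" using comp.IH[OF zP(1) comp.prems(2,3)] zP(2) by blast
  have zV: "z \<in> V" "par z' = z" using comp.prems(2,3) par_in_V unfolding child_def by auto
  have "z' \<notin> P - C P"
    using component_neighbour[OF comp.hyps(2) comp.prems(1) zV(1) comp.prems(3,4)] zV(2) by blast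
  then have "z' \<in> C P" using z'P by blast
  then show ?case using component_boundary_in_C[OF comp.hyps comp.prems(1,2,3)] by blast
qed

lemma canonical_exit:
  assumes "can U" "w \<in> U" "y \<in> V" "y \<notin> U" "child r par y w \<or> par w = y"
  obtains P where "can P" "U \<in> components V par (P - C P)" "y \<in> C P"
proof -
  have "U \<noteq> V" using assms(3,4) by blast
  with assms(1) obtain P where P: "can P" "U \<in> components V par (P - C P)"
    by (cases rule: canonical.cases) auto
  have U: "U \<subseteq> P - C P" using component_subtree[OF P(2)] by blast
  have wP: "w \<in> P" "w \<notin> C P" "w \<in> V" using U assms(2) canonical_subset[OF P(1)] by auto
  have stP: "is_subtree V par P" using canonical_subtree[OF P(1)] .
  have "y \<in> P"
    using assms(5)
  proof
    assume "child r par y w"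
    then show "y \<in> P" using canonical_boundary[OF P(1) wP(1) _ assms(3)] wP(2) by blast
  next
    assume y: "par w = y"
    have "anc par (rt par P) w" using subtree_rt(2)[OF stP] wP(1) by blast
    moreover have "rt par P \<noteq> w" using rt_in_C[OF P(1)] wP(2) by blast
    ultimately have "anc par (rt par P) y" using y by (blast intro: anc_par_strict)
    then show "y \<in> P" using subtree_convex[OF stP subtree_rt(1)[OF stP] wP(1) _ anc_par] y by blast
  qed
  moreover have "par y = w \<or> par w = y" using assms(5) unfolding child_def by blast
  then have "y \<notin> P - C P" using component_neighbour[OF P(2) assms(2) wP(3) assms(3,4)] by blast
  ultimately show ?thesis using that P by blast
qed

end

section \<open>Canonical sequences and routing\<close>

definition routing_progress :: "nat list \<Rightarrow> nat list \<Rightarrow> nat list \<Rightarrow> bool" where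
  "routing_progress a b c \<longleftrightarrow>
     (strict_prefix a b \<longrightarrow> length c > length a \<and> (c = b \<or> strict_prefix c b)) \<and>
     (strict_prefix b a \<longrightarrow> length c < length a \<and> (c = b \<or> strict_prefix b c)) \<and>
     (let S = longest_common_prefix a b in
        length S < min (length a) (length b) \<longrightarrow> length c < length a \<and> (c = S \<or> strict_prefix S c))"

lemma longest_common_prefix_prefix_eq: "prefix a b \<Longrightarrow> longest_common_prefix a b = a"
  using longest_common_prefix_max_prefix[of a a b] longest_common_prefix_prefix1[of a b]
  by (simp add: prefix_order.antisym)

lemma routing_progress_same: "routing_progress a a c"
  unfolding routing_progress_def Let_def using longest_common_prefix_prefix_eq[of a a] by simp

lemma routing_progress_descend:
  assumes "prefix (a @ [j]) b"
  shows "routing_progress a b (a @ [j])"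
proof -
  have ab: "prefix a b" using assms prefix_order.trans[of a "a @ [j]" b] by simp
  then have "\<not> strict_prefix b a" using prefix_order.antisym by (auto simp: strict_prefix_def)
  moreover have "a @ [j] = b \<or> strict_prefix (a @ [j]) b" using assms strict_prefix_def by blast
  ultimately show ?thesis
    unfolding routing_progress_def Let_def
      using longest_common_prefix_prefix_eq[OF ab] prefix_length_le[OF ab]
    by simp
qed

lemma routing_progress_ascend:
  assumes "\<not> strict_prefix (c @ [j]) b"
  shows "routing_progress (c @ [j]) b c"
proof -
  have "c = S \<or> strict_prefix S c" if "prefix S (c @ [j])" "S \<noteq> c @ [j]" for S
    using that by (auto simp: strict_prefix_def)
  moreover have "prefix (longest_common_prefix (c @ [j]) b) (c @ [j])"
    by (rule longest_common_prefix_prefix1)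
  ultimately show ?thesis
    unfolding routing_progress_def Let_def using assms by (auto simp: strict_prefix_def)
qed

locale sequenced_tree = canonical_tree +
  fixes seq :: "'a set \<Rightarrow> nat list"
  assumes valid_seq: "valid_seq V r par c1 k seq"
begin

abbreviation T :: "'a \<Rightarrow> 'a set" where
  "T v \<equiv> Tv V r par c1 k v"

lemma seq_top: "seq V = []"
  using valid_seq unfolding valid_seq_def by simp

lemma seq_components:
  assumes "can R"
  obtains f where "inj_on f (components V par (R - C R))"
    "\<forall>Q\<in>components V par (R - C R). seq Q = seq R @ [f Q]"
  using valid_seq assms bij_betw_imp_inj_on unfolding valid_seq_def by metis

lemma seq_component_snoc:
  assumes "can R" "Q \<in> components V par (R - C R)"
  obtains j where "seq Q = seq R @ [j]"
  using seq_components[OF assms(1)] assms(2) by metis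

lemma seq_inj: "can R1 \<Longrightarrow> can R2 \<Longrightarrow> seq R1 = seq R2 \<Longrightarrow> R1 = R2"
proof (induction arbitrary: R2 rule: canonical.induct)
  case top
  from top.prems(1) show ?case
  proof cases
    case (comp P)
    then obtain j where "seq R2 = seq P @ [j]" using seq_component_snoc by blast
    then show ?thesis using top.prems(2) seq_top by simp
  qed simp
next
  case (comp P1 Q1)
  obtain j1 where j1: "seq Q1 = seq P1 @ [j1]" using seq_component_snoc[OF comp.hyps] .
  from comp.prems(1) show ?case
  proof cases
    case top
    then show ?thesis using comp.prems(2) seq_top j1 by simp
  next
    case (comp P2)
    obtain j2 where "seq R2 = seq P2 @ [j2]" using seq_component_snoc[OF comp] .
    then have "seq P1 = seq P2" using j1 \<open>seq Q1 = seq R2\<close> by simp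
    then have P: "P1 = P2" using comp.IH comp by blast
    obtain f where f: "inj_on f (components V par (P1 - C P1))"
      "\<forall>Q\<in>components V par (P1 - C P1). seq Q = seq P1 @ [f Q]"
      using seq_components[OF \<open>can P1\<close>] .
    have "f Q1 = f R2" using f(2) comp.hyps(2) comp P \<open>seq Q1 = seq R2\<close> by auto
    then show ?thesis using f(1) comp.hyps(2) comp P unfolding inj_on_def by blast
  qed
qed

lemma canonical_nested:
  assumes "can R2" "can R1" "v \<in> R1" "v \<in> R2" "length (seq R1) \<le> length (seq R2)"
  shows "prefix (seq R1) (seq R2) \<and> (R1 = R2 \<or> R2 \<subseteq> R1 - C R1)"
  using assms
proof (induction arbitrary: R1 rule: canonical.induct)
  case top
  then have "seq R1 = seq V" using seq_top by simp
  then show ?case using seq_inj[OF top.prems(1) canonical.top] by simp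
next
  case (comp P Q)
  obtain j where j: "seq Q = seq P @ [j]" using seq_component_snoc[OF comp.hyps] .
  have Q: "Q \<subseteq> P - C P" using component_subtree[OF comp.hyps(2)] by blast
  have vP: "v \<in> P" using comp.prems(3) Q by blast
  show ?case
  proof (cases "length (seq R1) \<le> length (seq P)")
    case True
    then have "prefix (seq R1) (seq P)" "R1 = P \<or> P \<subseteq> R1 - C R1"
      using comp.IH[OF comp.prems(1,2) vP] by auto
    then show ?thesis using j Q by (auto intro: prefix_order.trans)
  next
    case False
    then have "R1 \<noteq> V" using seq_top by auto
    with comp.prems(1) obtain P' where P': "can P'" "R1 \<in> components V par (P' - C P')"
      by (cases rule: canonical.cases) auto
    obtain j' where j': "seq R1 = seq P' @ [j']" using seq_component_snoc[OF P'] .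
    have "v \<in> P'" using component_subtree[OF P'(2)] comp.prems(2) by blast
    moreover have "length (seq P') = length (seq P)" using False comp.prems(4) j j' by simp
    moreover have "prefix (seq P') (seq P)"
      using comp.IH[OF P'(1) \<open>v \<in> P'\<close> vP] calculation by simp
    ultimately have "seq P' = seq P" by (auto simp: prefix_def)
    then have "P' = P" using seq_inj[OF P'(1) comp.hyps(1)] by blast
    then have "R1 = Q" using component_unique P'(2) comp.hyps(2) comp.prems(2,3) by blast
    then show ?thesis by simp
  qed
qed

lemma C_unique:
  assumes "can R1" "can R2" "v \<in> C R1" "v \<in> C R2"
  shows "R1 = R2"
proof -
  have v: "v \<in> R1" "v \<in> R2"
    using C_subset[OF assms(1)] C_subset[OF assms(2)] assms(3,4) by blast+
  have *: "R1 = R2" if "can R1" "can R2" "v \<in> C R1" "v \<in> R1" "v \<in> R2"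
    "length (seq R1) \<le> length (seq R2)" for R1 R2
    using canonical_nested[OF that(2,1,4,5,6)] that(3,5) by blast
  show ?thesis
  proof (cases "length (seq R1) \<le> length (seq R2)")
    case True
    from *[OF assms(1,2,3) v True] show ?thesis .
  next
    case False
    then have "length (seq R2) \<le> length (seq R1)" by simp
    from *[OF assms(2,1,4) v(2,1) this] show ?thesis by simp
  qed
qed

lemma canonical_C_exists:
  assumes "can R" "v \<in> R"
  obtains R' where "can R'" "v \<in> C R'"
  using assms
proof (induction "card R" arbitrary: R rule: less_induct)
  case less
  show ?case
  proof (cases "v \<in> C R")
    case True
    then show ?thesis using less.prems by blast
  next
    case False
    obtain Q where Q: "Q \<in> components V par (R - C R)" "v \<in> Q"
      using component_exists[of "R - C R" v] canonical_subset[OF less.prems(2)] less.prems(3) False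
      by blast
    have "Q \<subseteq> R - C R" using component_subtree[OF Q(1)] by blast
    then have "Q \<subset> R" using rt_in_C[OF less.prems(2)] C_subset[OF less.prems(2)] by blast
    moreover have "finite R" using canonical_subset[OF less.prems(2)] finite_subset finite_V by blast
    ultimately have "card Q < card R" by (rule psubset_card_mono[rotated])
    then show ?thesis using less.hyps less.prems(1) canonical.comp[OF less.prems(2) Q(1)] Q(2) by blast
  qed
qed

lemma T_canonical:
  assumes "v \<in> V"
  shows "can (T v)" "v \<in> C (T v)"
proof -
  obtain R where R: "can R" "v \<in> C R" using canonical_C_exists[OF canonical.top assms] .
  have "T v = R" unfolding Tv_def
  proof (rule the_equality)
    show "can R \<and> v \<in> C R" using R by blast
    show "R' = R" if "can R' \<and> v \<in> C R'" for R' using C_unique[OF _ R(1) _ R(2)] that by blast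
  qed
  then show "can (T v)" "v \<in> C (T v)" using R by auto
qed

lemma T_eqI:
  assumes "v \<in> V" "can R" "v \<in> C R"
  shows "T v = R"
  using C_unique[OF T_canonical(1)[OF assms(1)] assms(2) T_canonical(2)[OF assms(1)] assms(3)] .

lemma seq_prefix_T:
  assumes "v \<in> V" "can R" "v \<in> R"
  shows "prefix (seq R) (seq (T v))"
proof -
  have T: "can (T v)" "v \<in> C (T v)" using T_canonical[OF assms(1)] by blast+
  then have "v \<in> T v" using C_subset by blast
  show ?thesis
  proof (cases "length (seq R) \<le> length (seq (T v))")
    case True
    then show ?thesis using canonical_nested[OF T(1) assms(2,3) \<open>v \<in> T v\<close>] by blast
  next
    case False
    then have "R = T v \<or> R \<subseteq> T v - C (T v)"
      using canonical_nested[OF assms(2) T(1) \<open>v \<in> T v\<close> assms(3)] by auto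
    then show ?thesis using T(2) assms(3) by auto
  qed
qed

lemma canonical_prefix_ancestor:
  "can R \<Longrightarrow> prefix s (seq R) \<Longrightarrow> \<exists>R'. can R' \<and> seq R' = s \<and> R \<subseteq> R'"
proof (induction arbitrary: s rule: canonical.induct)
  case top
  then show ?case using canonical.top[of V r par c1 k] seq_top by auto
next
  case (comp P Q)
  obtain j where j: "seq Q = seq P @ [j]" using seq_component_snoc[OF comp.hyps] .
  have QP: "Q \<subseteq> P" using component_subtree[OF comp.hyps(2)] by blast
  show ?case
  proof (cases "s = seq Q")
    case True
    then show ?thesis using canonical.comp[OF comp.hyps] by blast
  next
    case False
    then have "prefix s (seq P)" using comp.prems j by simp
    then show ?thesis using comp.IH QP by blast
  qed
qed

lemma mem_T_if_prefix:
  assumes "u \<in> V" "v \<in> V" "prefix (seq (T u)) (seq (T v))"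
  shows "v \<in> T u"
proof -
  obtain R where R: "can R" "seq R = seq (T u)" "T v \<subseteq> R"
    using canonical_prefix_ancestor[OF T_canonical(1)[OF assms(2)] assms(3)] by blast
  have "R = T u" using seq_inj[OF R(1) T_canonical(1)[OF assms(1)] R(2)] .
  moreover have "v \<in> T v"
    using C_subset[OF T_canonical(1)[OF assms(2)]] T_canonical(2)[OF assms(2)] by blast
  ultimately show ?thesis using R(3) by blast
qed

lemma T_subset: "u \<in> V \<Longrightarrow> T u \<subseteq> V"
  using canonical_subset[OF T_canonical(1)] .

lemma C_T_subset: "u \<in> V \<Longrightarrow> C (T u) \<subseteq> T u"
  using C_subset[OF T_canonical(1)] .

lemma route_down:
  assumes "u \<in> V" "v \<in> V" "anc par u v" "v \<notin> C (T u)"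
  obtains x where "x \<in> C (T u)" "anc par x v" "\<forall>y\<in>C (T u). anc par y v \<longrightarrow> anc par y x" "x \<noteq> v"
    "child r par (route V r par c1 k u v) x" "anc par (route V r par c1 k u v) v"
proof -
  let ?C = "C (T u)"
  define X where "X = {y \<in> ?C. anc par y v}"
  have CV: "?C \<subseteq> V" using C_T_subset[OF assms(1)] T_subset[OF assms(1)] by blast
  then have "X \<subseteq> V" unfolding X_def by blast
  then have "finite X" using finite_subset finite_V by blast
  moreover have "X \<noteq> {}" using T_canonical(2)[OF assms(1)] assms(3) unfolding X_def by blast
  moreover have "\<forall>a\<in>X. \<forall>b\<in>X. anc par a b \<or> anc par b a"
    using anc_linear[of par _ v] unfolding X_def by blast
  ultimately obtain x where x: "x \<in> X" "\<forall>y\<in>X. anc par y x"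
    using finite_chain_has_deepest by blast
  have x': "x \<in> ?C" "anc par x v" "\<forall>y\<in>?C. anc par y v \<longrightarrow> anc par y x" "x \<noteq> v"
    using x assms(4) unfolding X_def by auto
  let ?w = "THE w. child r par w x \<and> anc par w v"
  have "(THE x. x \<in> ?C \<and> anc par x v \<and> (\<forall>y. y \<in> ?C \<and> anc par y v \<longrightarrow> anc par y x)) = x"
    by (rule the_deepest_eq[of "\<lambda>x. x \<in> ?C \<and> anc par x v", unfolded conj_assoc])
      (use x' CV in auto)
  then have "route V r par c1 k u v = ?w"
    unfolding route_def Let_def using assms(3) x'(4) by simp
  moreover have "child r par ?w x \<and> anc par ?w v" using theI'[OF child_toward[OF x'(2,4) assms(2)]] .
  ultimately show ?thesis using that x' by simp
qed

lemma route_up: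
  assumes "u \<in> V" "v \<in> V" "anc par v u" "\<not> anc par u v" "v \<notin> C (T u)"
  obtains x where "x \<in> C (T u)" "anc par v x" "anc par x u"
    "\<forall>y\<in>C (T u). anc par v y \<and> anc par y u \<longrightarrow> anc par x y" "x \<noteq> v"
    "route V r par c1 k u v = par x"
proof -
  let ?C = "C (T u)"
  define X where "X = {y \<in> ?C. anc par v y \<and> anc par y u}"
  have CV: "?C \<subseteq> V" using C_T_subset[OF assms(1)] T_subset[OF assms(1)] by blast
  then have "X \<subseteq> V" unfolding X_def by blast
  then have "finite X" using finite_subset finite_V by blast
  moreover have "X \<noteq> {}" using T_canonical(2)[OF assms(1)] assms(3) unfolding X_def by auto
  moreover have "\<forall>a\<in>X. \<forall>b\<in>X. anc par a b \<or> anc par b a"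
    using anc_linear[of par _ u] unfolding X_def by blast
  ultimately obtain x where x: "x \<in> X" "\<forall>y\<in>X. anc par x y"
    using finite_chain_has_highest by blast
  have x': "x \<in> ?C" "anc par v x" "anc par x u" "\<forall>y\<in>?C. anc par v y \<and> anc par y u \<longrightarrow> anc par x y" "x \<noteq> v"
    using x assms(5) unfolding X_def by auto
  have "(THE x. x \<in> ?C \<and> anc par v x \<and> anc par x u \<and>
      (\<forall>y. y \<in> ?C \<and> anc par v y \<and> anc par y u \<longrightarrow> anc par x y)) = x"
    by (rule the_highest_eq[of "\<lambda>x. x \<in> ?C \<and> anc par v x \<and> anc par x u", unfolded conj_assoc])
      (use x' CV in auto)
  then have "route V r par c1 k u v = par x"
    unfolding route_def Let_def using assms(4) x'(5) by simp
  then show ?thesis using that x' by simp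
qed

lemma route_down_within:
  assumes "u \<in> V" "v \<in> V" "anc par u v" "v \<in> T u" "v \<notin> C (T u)"
  obtains Q where "Q \<in> components V par (T u - C (T u))" "v \<in> Q" "route V r par c1 k u v \<in> C Q"
proof -
  have U: "can (T u)" using T_canonical(1)[OF assms(1)] .
  obtain x where x: "x \<in> C (T u)" "anc par x v" "\<forall>y\<in>C (T u). anc par y v \<longrightarrow> anc par y x"
    "child r par (route V r par c1 k u v) x" "anc par (route V r par c1 k u v) v"
    using route_down[OF assms(1,2,3,5)] by blast
  obtain Q where Q: "Q \<in> components V par (T u - C (T u))" "v \<in> Q"
    using component_exists[of "T u - C (T u)" v] T_subset[OF assms(1)] assms(4,5) by blast
  have "rt par Q = route V r par c1 k u v" using component_rt_child(2)[OF U Q x] .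
  then have "route V r par c1 k u v \<in> C Q" using rt_in_C[OF canonical.comp[OF U Q(1)]] by simp
  then show ?thesis using that Q by blast
qed

lemma route_down_leave:
  assumes "u \<in> V" "v \<in> V" "anc par u v" "v \<notin> T u"
  obtains P where "can P" "T u \<in> components V par (P - C P)" "route V r par c1 k u v \<in> C P"
proof -
  let ?U = "T u"
  have U: "can ?U" "u \<in> C ?U" "?U \<subseteq> V"
    using T_canonical[OF assms(1)] T_subset[OF assms(1)] by blast+
  have "u \<in> ?U" "v \<notin> C ?U" using C_T_subset[OF assms(1)] U(2) assms(4) by blast+
  obtain x where x: "x \<in> C ?U" "anc par x v" "\<forall>y\<in>C ?U. anc par y v \<longrightarrow> anc par y x"
    "child r par (route V r par c1 k u v) x" "anc par (route V r par c1 k u v) v"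
    using route_down[OF assms(1,2,3) \<open>v \<notin> C ?U\<close>] by blast
  define Z where "Z = {s \<in> ?U. anc par s v}"
  have "Z \<subseteq> V" using U(3) unfolding Z_def by blast
  then have "finite Z" using finite_subset finite_V by blast
  moreover have "Z \<noteq> {}" using \<open>u \<in> ?U\<close> assms(3) unfolding Z_def by blast
  moreover have "\<forall>a\<in>Z. \<forall>b\<in>Z. anc par a b \<or> anc par b a"
    using anc_linear[of par _ v] unfolding Z_def by blast
  ultimately obtain z where z: "z \<in> Z" "\<forall>s\<in>Z. anc par s z"
    using finite_chain_has_deepest by blast
  have zU: "z \<in> ?U" "anc par z v" "z \<in> V" using z(1) U(3) unfolding Z_def by auto
  have "z \<noteq> v" using zU(1) assms(4) by blast
  then obtain z' where z': "child r par z' z" "anc par z' v"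
    using child_toward[OF zU(2) _ assms(2)] by blast
  have z'V: "z' \<in> V" using anc_in_V[OF z'(2) assms(2)] .
  have "z' \<notin> ?U"
  proof
    assume "z' \<in> ?U"
    then have "anc par z' z" using z(2) z'(2) unfolding Z_def by blast
    then have "z' = z" using anc_antisym[OF _ child_anc[OF z'(1)] zU(3)] by blast
    then show False using child_ne[OF z'(1) z'V] by blast
  qed
  have "z \<in> C ?U" using canonical_boundary[OF U(1) zU(1) z'(1) z'V \<open>z' \<notin> ?U\<close>] .
  then have "anc par z x" using x(3) zU(2) by blast
  moreover have "anc par x z" using z(2) x(1,2) C_T_subset[OF assms(1)] unfolding Z_def by blast
  ultimately have "x = z" using anc_antisym[OF _ _ zU(3)] by blast
  then have "route V r par c1 k u v = z'"
    using child_anc_unique[OF x(4)[unfolded \<open>x = z\<close>] z'(1) x(5) z'(2) assms(2)] by simp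
  moreover obtain P where "can P" "?U \<in> components V par (P - C P)" "z' \<in> C P"
    using canonical_exit[OF U(1) zU(1) z'V \<open>z' \<notin> ?U\<close>] z'(1) by blast
  ultimately show ?thesis using that by blast
qed

lemma route_up_within:
  assumes "u \<in> V" "v \<in> V" "anc par v u" "\<not> anc par u v" "v \<in> T u" "v \<notin> C (T u)"
  obtains Q where "Q \<in> components V par (T u - C (T u))" "v \<in> Q" "route V r par c1 k u v \<in> C Q"
proof -
  let ?U = "T u"
  have U: "can ?U" "?U \<subseteq> V" "is_subtree V par ?U"
    using T_canonical(1)[OF assms(1)] T_subset[OF assms(1)] canonical_subtree by blast+
  obtain x where x: "x \<in> C ?U" "anc par v x" "anc par x u"
    "\<forall>y\<in>C ?U. anc par v y \<and> anc par y u \<longrightarrow> anc par x y" "x \<noteq> v" "route V r par c1 k u v = par x"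
    using route_up[OF assms(1-4,6)] by blast
  have xU: "x \<in> ?U" "x \<in> V" using x(1) C_T_subset[OF assms(1)] U(2) by blast+
  have "x \<noteq> r" using anc_antisym[OF x(2) _ xU(2)] root_anc[OF assms(2)] x(5) by blast
  then have x_par: "\<not> anc par x (par x)" using not_anc_par xU(2) by blast
  have vpx: "anc par v (par x)" using anc_par_strict[OF x(2)] x(5) by simp
  have "segment v (par x) \<subseteq> ?U - C ?U"
  proof
    fix s assume "s \<in> segment v (par x)"
    then have s: "anc par v s" "anc par s (par x)" unfolding segment_def by auto
    have sx: "anc par s x" using anc_trans[OF s(2) anc_par] .
    have "s \<notin> C ?U"
    proof
      assume "s \<in> C ?U"
      then have "anc par x s" using x(4) s(1) anc_trans[OF sx x(3)] by blast
      then show False using x_par anc_trans[OF _ s(2)] by blast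
    qed
    then show "s \<in> ?U - C ?U" using subtree_convex[OF U(3) assms(5) xU(1) s(1) sx] by blast
  qed
  moreover obtain Q where Q: "Q \<in> components V par (?U - C ?U)" "v \<in> Q"
    using component_exists[of "?U - C ?U" v] U(2) assms(5,6) by blast
  ultimately have "segment v (par x) \<subseteq> Q"
    using segment_in_component[OF Q(1) vpx par_in_V[OF xU(2)]] by blast
  then have "par x \<in> Q" using vpx unfolding segment_def by auto
  moreover have "x \<notin> Q" using x(1) component_subtree[OF Q(1)] by blast
  moreover have "child r par x (par x)" using \<open>x \<noteq> r\<close> unfolding child_def by simp
  ultimately have "par x \<in> C Q"
    using canonical_boundary[OF canonical.comp[OF U(1) Q(1)]] xU(2) by blast
  then show ?thesis using that Q x(6) by simp
qed

lemma route_up_leave: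
  assumes "u \<in> V" "v \<in> V" "anc par v u" "\<not> anc par u v" "v \<notin> T u"
  obtains P where "can P" "T u \<in> components V par (P - C P)" "route V r par c1 k u v \<in> C P"
proof -
  let ?U = "T u"
  have U: "can ?U" "?U \<subseteq> V" "is_subtree V par ?U" "u \<in> ?U"
    using T_canonical[OF assms(1)] T_subset[OF assms(1)] canonical_subtree C_T_subset[OF assms(1)]
    by blast+
  have "v \<notin> C ?U" using C_T_subset[OF assms(1)] assms(5) by blast
  obtain x where x: "x \<in> C ?U" "anc par v x" "anc par x u"
    "\<forall>y\<in>C ?U. anc par v y \<and> anc par y u \<longrightarrow> anc par x y" "x \<noteq> v" "route V r par c1 k u v = par x"
    using route_up[OF assms(1-4) \<open>v \<notin> C ?U\<close>] by blast
  have xU: "x \<in> ?U" "x \<in> V" using x(1) C_T_subset[OF assms(1)] U(2) by blast+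
  have "x \<noteq> r" using anc_antisym[OF x(2) _ xU(2)] root_anc[OF assms(2)] x(5) by blast
  have rt: "rt par ?U \<in> ?U" "\<forall>y\<in>?U. anc par (rt par ?U) y"
    using subtree_rt[OF U(3)] by blast+
  have "\<not> anc par (rt par ?U) v"
    using subtree_convex[OF U(3) rt(1) U(4) _ assms(3)] assms(5) by blast
  then have "anc par v (rt par ?U)" using anc_linear[OF assms(3)] rt(2) U(4) by blast
  then have "anc par x (rt par ?U)" using x(4) rt_in_C[OF U(1)] rt(2) U(4) by blast
  then have "x = rt par ?U" using anc_antisym[OF _ _ U(2)[THEN subsetD, OF rt(1)]] rt(2) xU(1) by blast
  then have "par x \<notin> ?U" using rt(2) not_anc_par[OF xU(2) \<open>x \<noteq> r\<close>] by auto
  then obtain P where "can P" "?U \<in> components V par (P - C P)" "par x \<in> C P"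
    using canonical_exit[OF U(1) xU(1) par_in_V[OF xU(2)]] by blast
  then show ?thesis using that x(6) by simp
qed

lemma route_cases:
  assumes "u \<in> V" "v \<in> V" "anc par u v \<or> anc par v u"
  obtains (same) "v \<in> C (T u)"
    | (descend) Q where "Q \<in> components V par (T u - C (T u))" "v \<in> Q" "route V r par c1 k u v \<in> C Q"
    | (ascend) P where "can P" "T u \<in> components V par (P - C P)" "v \<notin> T u" "route V r par c1 k u v \<in> C P"
proof -
  consider "v \<in> C (T u)" | "v \<in> T u - C (T u)" "anc par u v" | "v \<in> T u - C (T u)" "\<not> anc par u v"
    | "v \<notin> T u" "anc par u v" | "v \<notin> T u" "\<not> anc par u v"
    using C_T_subset[OF assms(1)] by blast
  then show ?thesis
  proof cases
    case 1
    then show ?thesis using same by blast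
  next
    case 2
    then show ?thesis using route_down_within[OF assms(1,2)] descend by blast
  next
    case 3
    then show ?thesis using route_up_within[OF assms(1,2)] assms(3) descend by blast
  next
    case 4
    then show ?thesis using route_down_leave[OF assms(1,2)] ascend by blast
  next
    case 5
    then show ?thesis using route_up_leave[OF assms(1,2)] assms(3) ascend by blast
  qed
qed

lemma routing_progress_route:
  assumes "u \<in> V" "v \<in> V" "anc par u v \<or> anc par v u"
  shows "routing_progress (seq (T u)) (seq (T v)) (seq (T (route V r par c1 k u v)))"
  using assms
proof (cases rule: route_cases)
  case same
  then have "T v = T u" using T_eqI[OF assms(2) T_canonical(1)[OF assms(1)]] by blast
  then show ?thesis using routing_progress_same by simp
next
  case (descend Q)
  have Q: "can Q" using canonical.comp[OF T_canonical(1)[OF assms(1)] descend(1)] .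
  then have "T (route V r par c1 k u v) = Q"
    using T_eqI descend(3) C_subset[OF Q] canonical_subset[OF Q] by blast
  moreover obtain j where "seq Q = seq (T u) @ [j]"
    using seq_component_snoc[OF T_canonical(1)[OF assms(1)] descend(1)] .
  moreover have "prefix (seq Q) (seq (T v))" using seq_prefix_T[OF assms(2) Q descend(2)] .
  ultimately show ?thesis using routing_progress_descend by simp
next
  case (ascend P)
  then have "T (route V r par c1 k u v) = P"
    using T_eqI ascend(4) C_subset[OF ascend(1)] canonical_subset[OF ascend(1)] by blast
  moreover obtain j where "seq (T u) = seq P @ [j]" using seq_component_snoc[OF ascend(1,2)] .
  moreover have "\<not> strict_prefix (seq (T u)) (seq (T v))"
    using mem_T_if_prefix[OF assms(1,2)] ascend(3) by (auto simp: strict_prefix_def)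
  ultimately show ?thesis using routing_progress_ascend by simp
qed

end

theorem lemma13:
  fixes V :: "'a set" and r :: 'a and par c1 :: "'a \<Rightarrow> 'a" and k :: nat
    and seq :: "'a set \<Rightarrow> nat list" and u v u' :: 'a
  assumes "is_rooted_tree V r par" and "valid_c1 V r par c1" and "k \<ge> 4"
    and "valid_seq V r par c1 k seq"
    and "u \<in> V" and "v \<in> V" and "u \<noteq> v" and "anc par u v \<or> anc par v u"
    and "u' = route V r par c1 k u v"
  shows "(strict_prefix (Sv V r par c1 k seq u) (Sv V r par c1 k seq v) \<longrightarrow>
            length (Sv V r par c1 k seq u') > length (Sv V r par c1 k seq u) \<and>
            (Sv V r par c1 k seq u' = Sv V r par c1 k seq v \<or>
             strict_prefix (Sv V r par c1 k seq u') (Sv V r par c1 k seq v)))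
       \<and> (strict_prefix (Sv V r par c1 k seq v) (Sv V r par c1 k seq u) \<longrightarrow>
            length (Sv V r par c1 k seq u') < length (Sv V r par c1 k seq u) \<and>
            (Sv V r par c1 k seq u' = Sv V r par c1 k seq v \<or>
             strict_prefix (Sv V r par c1 k seq v) (Sv V r par c1 k seq u')))
       \<and> (let S = longest_common_prefix (Sv V r par c1 k seq u) (Sv V r par c1 k seq v) in
           length S < min (length (Sv V r par c1 k seq u)) (length (Sv V r par c1 k seq v)) \<longrightarrow>
            length (Sv V r par c1 k seq u') < length (Sv V r par c1 k seq u) \<and>
            (Sv V r par c1 k seq u' = S \<or> strict_prefix S (Sv V r par c1 k seq u')))"
proof -
  interpret sequenced_tree V r par c1 k seq
    using assms(1,4) by unfold_locales
  have "routing_progress (seq (T u)) (seq (T v)) (seq (T u'))"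
    using routing_progress_route[OF assms(5,6,8)] assms(9) by simp
  then show ?thesis unfolding routing_progress_def Sv_def .
qed

end
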